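(* Let $N\in\mathbb{N}$, $d\in\mathbb{N}$, and let $b_1,\dots,b_d\in\{\lceil N^{1/2}/\sqrt{2}\rceil,\dots,\lfloor N^{1/2}\rfloor\}$ be coprime to $N$ with $b_{i+1}=b_i+1$ for $1\le i<d$. Set $D:=b_1+\lfloor N/b_d\rfloor$. For each $i$ write the $b_i$-adic digit polynomial of $N$ as $P_{b_i}=n_{2,i}X^2+n_{1,i}X+n_{0,i}$ (i.e. $n_{k,i}$ is the coefficient of $X^k$ in $P_{b_i}$). Suppose $\gcd(D+z,N)=1$ for every $z\in\{0,\dots,2d-2\}$ and $n_{1,i}\le n_{0,i}+1$ for every $i$. Then $\gcd(n_{2,i}b_i,N)=1$ for every $i$, and, defining $b_{d+i}:=n_{0,i}\cdot n_{2,i}^{-1}\cdot b_i^{-1}\bmod N$ for $1\le i\le d$, we have $\gcd(b_j-b_k,N)=1$ for all $j,k\in\{1,\dots,2d\}$ with $j\neq k$.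
   Context: For an integer $b\ge 2$, if $N=\sum_{i\ge0}n_ib^i$ is the unique base-$b$ representation of $N$ with digits $n_i\in\{0,\dots,b-1\}$, the $b$-adic digit polynomial of $N$ is $P_b:=\sum_{i\ge0}n_iX^i\in\mathbb{Z}[X]$. *)

theory Defs
  imports Complex_Main "HOL-Computational_Algebra.Polynomial" "HOL-Number_Theory.Number_Theory"
begin

text \<open>For b >= 2 all digits of index >= N vanish
  (b^N > N), so the finite sum below is the full digit polynomial.\<close>
definition digit_poly :: "nat \<Rightarrow> nat \<Rightarrow> int poly" where
  "digit_poly b N = (\<Sum>i\<le>N. Polynomial.monom (int ((N div b ^ i) mod b)) i)"

end

theory Submission
  imports Defs
begin

(*
  A base b in the given range that is coprime to N satisfies b^2 <= N < 2 b^2, so the digit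
  polynomial is X^2 + (floor(N/b) - b) X + N mod b. Hence n_2 = 1, and N = b floor(N/b) + n_0
  gives b_(d+i) = -floor(N/b_i) (mod N). The digit condition n_1 <= n_0 + 1 is exactly what makes
  floor(N/(b+1)) = floor(N/b) - 1, so both b_1, ..., b_d and -floor(N/b_1), ..., -floor(N/b_d)
  are runs of consecutive integers. Differences inside a run are nonzero and below 2d in
  absolute value, differences across the runs are +-(D + z) with 0 <= z <= 2d - 2. Both are
  coprime to N, the former because a common divisor of N and a positive number below 2d would
  divide one of the consecutive integers D, ..., D + 2d - 2.
*)

lemma square_bounds_of_sqrt_bounds:
  fixes N b :: nat
  assumes lower: "\<lceil>sqrt (real N) / sqrt 2\<rceil> \<le> int b" and upper: "int b \<le> \<lfloor>sqrt (real N)\<rfloor>"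
    and "2 \<le> b" and "coprime b N"
  shows "b * b \<le> N" and "N < 2 * (b * b)"
proof -
  have "real b \<le> sqrt (real N)"
    using upper by (simp add: le_floor_iff)
  then have "real (b * b) \<le> real N"
    using sqrt_ge_absD[of "real b" "real N"] by (simp add: power2_eq_square)
  then show "b * b \<le> N" by (simp only: of_nat_le_iff)
  have "sqrt (real N) \<le> real b * sqrt 2"
    using lower by (simp add: ceiling_le_iff divide_le_eq)
  also have "\<dots> = sqrt (real (2 * (b * b)))"
    by (simp add: real_sqrt_mult)
  finally have "N \<le> 2 * (b * b)" by (simp only: real_sqrt_le_iff of_nat_le_iff)
  moreover have "N \<noteq> 2 * (b * b)"
  proof
    assume "N = 2 * (b * b)"
    then have "b dvd N" by simp
    with \<open>coprime b N\<close> have "b = 1" using coprime_common_divisor_nat dvd_refl by metis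
    with \<open>2 \<le> b\<close> show False by simp
  qed
  ultimately show "N < 2 * (b * b)" by simp
qed

lemma coeff_digit_poly:
  "k \<le> N \<Longrightarrow> Polynomial.coeff (digit_poly b N) k = int ((N div b ^ k) mod b)"
  unfolding digit_poly_def by (simp add: coeff_sum coeff_monom)

lemma div_base_bounds:
  fixes N b :: nat
  assumes "0 < b" "b * b \<le> N" "N < 2 * (b * b)"
  shows "b \<le> N div b" and "N div b < 2 * b"
  using assms by (simp_all add: less_eq_div_iff_mult_less_eq div_less_iff_less_mult mult.assoc)

lemma digit_poly_coeffs_of_square_bounds:
  fixes N b :: nat
  assumes "2 \<le> b" "b * b \<le> N" "N < 2 * (b * b)"
  shows "Polynomial.coeff (digit_poly b N) 0 = int (N mod b)"
    and "Polynomial.coeff (digit_poly b N) 1 = int (N div b - b)"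
    and "Polynomial.coeff (digit_poly b N) 2 = 1"
proof -
  have "2 \<le> N" using assms mult_le_mono[of 1 b 2 b] by linarith
  have "b \<le> N div b" "N div b < 2 * b" using div_base_bounds assms by simp_all
  then have "(N div b) mod b = N div b - b" by (simp add: le_mod_geq)
  moreover have "N div b ^ 2 = 1" using assms by (intro div_nat_eqI) (auto simp: power2_eq_square)
  ultimately show "Polynomial.coeff (digit_poly b N) 0 = int (N mod b)"
    and "Polynomial.coeff (digit_poly b N) 1 = int (N div b - b)"
    and "Polynomial.coeff (digit_poly b N) 2 = 1"
    using \<open>2 \<le> N\<close> assms(1) by (simp_all add: coeff_digit_poly)
qed

lemma div_base_add_one:
  fixes N b :: nat
  assumes "0 < b" "b \<le> N div b" "N div b - b \<le> N mod b + 1"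
  shows "N div (b + 1) = N div b - 1"
proof (rule div_nat_eqI)
  have N: "N = b * (N div b) + N mod b" by simp
  have "(b + 1) * (N div b - 1) = b * (N div b) + N div b - b - 1"
    using assms by (simp add: algebra_simps diff_mult_distrib2)
  then show "(b + 1) * (N div b - 1) \<le> N" using assms(3) N by linarith
  have "(b + 1) * Suc (N div b - 1) = b * (N div b) + N div b"
    using assms by (simp add: algebra_simps)
  moreover have "N mod b < N div b" using assms by (meson mod_less_divisor order_less_le_trans)
  ultimately show "N < (b + 1) * Suc (N div b - 1)" using N by linarith
qed

lemma digit_poly_div_base_add_one:
  fixes N b :: nat
  assumes "2 \<le> b" "b * b \<le> N" "N < 2 * (b * b)"
    and "Polynomial.coeff (digit_poly b N) 1 \<le> Polynomial.coeff (digit_poly b N) 0 + 1"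
  shows "int (N div (b + 1)) = int (N div b) - 1"
proof -
  have "0 < b" using assms(1) by simp
  moreover have "b \<le> N div b" using div_base_bounds(1) \<open>0 < b\<close> assms(2,3) by simp
  moreover have "N div b - b \<le> N mod b + 1"
    using assms(4) digit_poly_coeffs_of_square_bounds[OF assms(1-3)] by simp
  ultimately have "N div (b + 1) = N div b - 1" by (rule div_base_add_one)
  then show ?thesis using \<open>0 < b\<close> \<open>b \<le> N div b\<close> by simp
qed

lemma mod_mult_modular_inverse_cong:
  fixes N b :: nat
  assumes "coprime b N"
  shows "[int (N mod b) * modular_inverse (int N) (int b) = - int (N div b)] (mod int N)"
proof -
  define u where "u = modular_inverse (int N) (int b)"
  have inverse: "[int b * u = 1] (mod int N)"
    unfolding u_def using assms by (intro cong_modular_inverse1) simp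
  have "int N = int b * int (N div b) + int (N mod b)"
    unfolding of_nat_mult [symmetric] of_nat_add [symmetric] by simp
  then have "int (N mod b) = int N - int b * int (N div b)" by simp
  also have "[\<dots> = 0 - int b * int (N div b)] (mod int N)"
    by (intro cong_diff cong_refl) (simp add: cong_def)
  finally have "[int (N mod b) * u = (0 - int b * int (N div b)) * u] (mod int N)"
    by (rule cong_mult) (rule cong_refl)
  also have "(0 - int b * int (N div b)) * u = - int (N div b) * (int b * u)"
    by (simp add: algebra_simps)
  also have "[\<dots> = - int (N div b) * 1] (mod int N)"
    using inverse by (rule cong_mult[OF cong_refl])
  finally show ?thesis by (simp add: u_def)
qed

lemma digit_poly_cofactor_cong:
  fixes N b :: nat
  defines "P \<equiv> digit_poly b N"
  assumes "2 \<le> b" "b * b \<le> N" "N < 2 * (b * b)" "coprime b N"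
  shows "[(Polynomial.coeff P 0 * modular_inverse (int N) (Polynomial.coeff P 2)
            * modular_inverse (int N) (int b)) mod int N = - int (N div b)] (mod int N)"
proof -
  have "int N > 1" using assms mult_le_mono[of 2 b 2 b] by linarith
  then have "modular_inverse (int N) (Polynomial.coeff P 2) = 1"
    unfolding P_def using assms(2-4) by (simp only: digit_poly_coeffs_of_square_bounds modular_inverse_1)
  moreover have "Polynomial.coeff P 0 = int (N mod b)"
    unfolding P_def using assms(2-4) by (rule digit_poly_coeffs_of_square_bounds)
  ultimately show ?thesis
    using mod_mult_modular_inverse_cong[OF \<open>coprime b N\<close>] by (simp add: cong_mod_left)
qed

lemma coprime_if_window_coprime:
  fixes D N m a :: nat
  assumes window: "\<And>z. z < m \<Longrightarrow> coprime (D + z) N" and "0 < a" and "a \<le> m"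
  shows "coprime a N"
proof -
  define g where "g = gcd a N"
  have "0 < g" "g \<le> a" using \<open>0 < a\<close> unfolding g_def by (simp_all add: gcd_le1_nat)
  define z where "z = (g - D mod g) mod g"
  have "z < g" unfolding z_def using \<open>0 < g\<close> by simp
  have "g dvd D + z"
  proof (cases "g dvd D")
    case True
    then show ?thesis unfolding z_def by (simp add: dvd_eq_mod_eq_0)
  next
    case False
    then have "z = g - D mod g"
      unfolding z_def using \<open>0 < g\<close> by (simp add: dvd_eq_mod_eq_0)
    moreover have "D = g * (D div g) + D mod g" "D mod g < g"
      using \<open>0 < g\<close> by simp_all
    ultimately have "D + z = g * (D div g) + g" by linarith
    then show ?thesis by simp
  qed
  moreover have "g dvd N" unfolding g_def by simp
  moreover have "z < m" using \<open>z < g\<close> \<open>g \<le> a\<close> \<open>a \<le> m\<close> by linarith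
  ultimately have "g = 1" using coprime_common_divisor_nat[OF window] by metis
  then have "gcd a N = 1" by (simp only: g_def)
  then show ?thesis by (simp only: coprime_iff_gcd_eq_1)
qed

lemma coprime_int_if_window_coprime:
  fixes D N m :: nat and x :: int
  assumes window: "\<And>z. z < m \<Longrightarrow> coprime (D + z) N" and "x \<noteq> 0" and "\<bar>x\<bar> \<le> int m"
  shows "coprime x (int N)"
proof -
  have "coprime (nat \<bar>x\<bar>) N"
    by (rule coprime_if_window_coprime[of m D N]) (use assms in auto)
  then have "coprime (int (nat \<bar>x\<bar>)) (int N)" by simp
  then show ?thesis by simp
qed

lemma arith_progression_eq:
  fixes f :: "nat \<Rightarrow> int"
  assumes f_step: "\<And>i. 1 \<le> i \<Longrightarrow> i < d \<Longrightarrow> f (i + 1) = f i + c"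
    and "1 \<le> i" and "i \<le> d"
  shows "f i = f 1 + int (i - 1) * c"
  using assms(2,3)
proof (induction i rule: dec_induct)
  case (step i)
  then show ?case using f_step[of i] by (simp add: algebra_simps of_nat_diff)
qed simp

lemma coprime_differences_two_blocks:
  fixes N D d :: nat and u v :: "nat \<Rightarrow> int"
  assumes window: "\<And>z. z \<le> 2 * d - 2 \<Longrightarrow> coprime (D + z) N"
    and u_step: "\<And>i. 1 \<le> i \<Longrightarrow> i < d \<Longrightarrow> u (i + 1) = u i + 1"
    and v_step: "\<And>i. 1 \<le> i \<Longrightarrow> i < d \<Longrightarrow> v (i + 1) = v i + 1"
    and D: "int D = u 1 - v d"
    and j: "j \<in> {1..2 * d}" and k: "k \<in> {1..2 * d}" and "j \<noteq> k"
  shows "coprime ((if j \<le> d then u j else v (j - d)) - (if k \<le> d then u k else v (k - d))) (int N)"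
proof -
  have u: "u i = u 1 + int (i - 1)" and v: "v i = v 1 + int (i - 1)" if "i \<in> {1..d}" for i
    using arith_progression_eq[of d u 1 i] arith_progression_eq[of d v 1 i] u_step v_step that by auto
  have small: "coprime x (int N)" if "x \<noteq> 0" "\<bar>x\<bar> \<le> int (2 * d - 1)" for x
    by (rule coprime_int_if_window_coprime[where D = D, OF _ that]) (use window in auto)
  have cross: "u i - v l = int (D + ((i - 1) + (d - l)))" if "i \<in> {1..d}" "l \<in> {1..d}" for i l
    using u[OF that(1)] v[OF that(2)] v[of d] D that by auto
  consider "j \<le> d" "k \<le> d" | "d < j" "d < k" | "j \<le> d" "d < k" | "d < j" "k \<le> d"
    by linarith
  then show ?thesis
  proof cases
    case 1
    then have j': "j \<in> {1..d}" and k': "k \<in> {1..d}" using j k by auto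
    then have "u j - u k = int j - int k" using u[OF j'] u[OF k'] by (auto simp: of_nat_diff)
    then show ?thesis using 1 j k \<open>j \<noteq> k\<close> by (simp add: small)
  next
    case 2
    then have j': "j - d \<in> {1..d}" and k': "k - d \<in> {1..d}" using j k by auto
    then have "v (j - d) - v (k - d) = int j - int k" using v[OF j'] v[OF k'] by (auto simp: of_nat_diff)
    then show ?thesis using 2 j k \<open>j \<noteq> k\<close> by (simp add: small)
  next
    case 3
    then have "j \<in> {1..d}" "k - d \<in> {1..d}" using j k by auto
    then have "u j - v (k - d) = int (D + ((j - 1) + (d - (k - d))))" by (rule cross)
    moreover have "coprime (D + ((j - 1) + (d - (k - d)))) N" using 3 j k by (intro window) auto
    ultimately have "coprime (u j - v (k - d)) (int N)" by (simp only: coprime_int_iff)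
    then show ?thesis using 3 by simp
  next
    case 4
    then have "k \<in> {1..d}" "j - d \<in> {1..d}" using j k by auto
    then have "u k - v (j - d) = int (D + ((k - 1) + (d - (j - d))))" by (rule cross)
    moreover have "coprime (D + ((k - 1) + (d - (j - d)))) N" using 4 j k by (intro window) auto
    ultimately have "coprime (u k - v (j - d)) (int N)" by (simp only: coprime_int_iff)
    then have "coprime (- (u k - v (j - d))) (int N)" by (simp only: coprime_minus_left_iff)
    then show ?thesis using 4 by simp
  qed
qed

theorem lemma2p13:
  fixes N d :: nat and b :: "nat \<Rightarrow> nat"
    and n :: "nat \<Rightarrow> nat \<Rightarrow> int" and D :: nat and B :: "nat \<Rightarrow> int"
  assumes b_range: "\<And>i. i \<in> {1..d} \<Longrightarrow>
      \<lceil>sqrt (real N) / sqrt 2\<rceil> \<le> int (b i) \<and> int (b i) \<le> \<lfloor>sqrt (real N)\<rfloor>"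
    and b_base: "\<And>i. i \<in> {1..d} \<Longrightarrow> b i \<ge> 2"
    and b_coprime: "\<And>i. i \<in> {1..d} \<Longrightarrow> coprime (b i) N"
    and b_consec: "\<And>i. 1 \<le> i \<Longrightarrow> i < d \<Longrightarrow> b (i + 1) = b i + 1"
    and D_def: "D = b 1 + N div b d"
    and n_def: "\<And>k i. n k i = Polynomial.coeff (digit_poly (b i) N) k"
    and D_gcd: "\<And>z. z \<in> {0..2 * d - 2} \<Longrightarrow> gcd (D + z) N = 1"
    and digit_cond: "\<And>i. i \<in> {1..d} \<Longrightarrow> n 1 i \<le> n 0 i + 1"
    and B_def: "\<And>j. B j = (if j \<le> d then int (b j)
        else (n 0 (j - d) * modular_inverse (int N) (n 2 (j - d))
               * modular_inverse (int N) (int (b (j - d)))) mod int N)"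
  shows "(\<forall>i \<in> {1..d}. gcd (n 2 i * int (b i)) (int N) = 1) \<and>
         (\<forall>j \<in> {1..2 * d}. \<forall>k \<in> {1..2 * d}. j \<noteq> k \<longrightarrow> gcd (B j - B k) (int N) = 1)"
proof -
  have square: "b i * b i \<le> N" "N < 2 * (b i * b i)" if i: "i \<in> {1..d}" for i
    using square_bounds_of_sqrt_bounds[of N "b i"] b_range[OF i] b_base[OF i] b_coprime[OF i] by auto
  have n2: "n 2 i = 1" if i: "i \<in> {1..d}" for i
    unfolding n_def using b_base[OF i] square[OF i] by (rule digit_poly_coeffs_of_square_bounds(3))
  have quotient_step: "- int (N div b (i + 1)) = - int (N div b i) + 1" if "1 \<le> i" "i < d" for i
  proof -
    from that have i: "i \<in> {1..d}" by simp
    show ?thesis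
      using digit_poly_div_base_add_one[OF b_base[OF i] square[OF i]] digit_cond[OF i] b_consec[OF that]
      by (simp add: n_def)
  qed
  define C where "C j = (if j \<le> d then int (b j) else - int (N div b (j - d)))" for j
  have B_cong: "[B j = C j] (mod int N)" if "j \<in> {1..2 * d}" for j
  proof (cases "j \<le> d")
    case False
    then have i: "j - d \<in> {1..d}" using that by auto
    show ?thesis
      using digit_poly_cofactor_cong[OF b_base[OF i] square[OF i] b_coprime[OF i]] False
      by (simp add: B_def C_def n_def)
  qed (simp add: B_def C_def)
  have C_coprime: "coprime (C j - C k) (int N)" if "j \<in> {1..2 * d}" "k \<in> {1..2 * d}" "j \<noteq> k" for j k
    unfolding C_def
  proof (rule coprime_differences_two_blocks[where u = "\<lambda>i. int (b i)" and v = "\<lambda>i. - int (N div b i)",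
        OF _ _ quotient_step _ that])
    show "coprime (D + z) N" if "z \<le> 2 * d - 2" for z
      unfolding coprime_iff_gcd_eq_1 using that by (intro D_gcd) simp
    show "int (b (i + 1)) = int (b i) + 1" if "1 \<le> i" "i < d" for i
      using b_consec[OF that] by simp
    show "int D = int (b 1) - - int (N div b d)" using D_def by simp
  qed
  show ?thesis
  proof (intro conjI ballI impI)
    fix i assume i: "i \<in> {1..d}"
    have "coprime (n 2 i * int (b i)) (int N)" using n2[OF i] b_coprime[OF i] by simp
    then show "gcd (n 2 i * int (b i)) (int N) = 1" by (simp only: coprime_iff_gcd_eq_1)
  next
    fix j k assume jk: "j \<in> {1..2 * d}" "k \<in> {1..2 * d}" "j \<noteq> k"
    have "gcd (B j - B k) (int N) = gcd (C j - C k) (int N)"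
      by (rule cong_gcd_eq[OF cong_diff[OF B_cong[OF jk(1)] B_cong[OF jk(2)]]])
    also have "\<dots> = 1" using C_coprime[OF jk] by (simp only: coprime_iff_gcd_eq_1)
    finally show "gcd (B j - B k) (int N) = 1" .
  qed
qed

end
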